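(* Let $P$ be a subgroup of $I_K(\mathfrak{n})$ with $P_{K,1}(\mathfrak{n})\subseteq P\subseteq P_K(\mathfrak{n})$ and let $\Gamma$ be any subgroup of $\mathrm{SL}_2(\mathbb{Z})$. Suppose the map $\phi_\Gamma:\mathcal{Q}_N(d_K)/\sim_\Gamma\to I_K(\mathfrak{n})/P$, $[Q]\mapsto[[\omega_Q,1]]$, is well defined (i.e. $Q\sim_\Gamma Q'$ implies $[\omega_Q,1]P=[\omega_{Q'},1]P$). Then $\phi_\Gamma$ is surjective.
   Context: Let $K$ be an imaginary quadratic field with discriminant $d_K$ and ring of integers $\mathcal{O}_K$. Let $N$ be a positive integer and $\mathfrak{n}=N\mathcal{O}_K$. $I_K(\mathfrak{n})$ denotes the group of fractional ideals of $K$ relatively prime to $\mathfrak{n}$, $P_K(\mathfrak{n})$ its subgroup of principal fractional ideals, and $P_{K,1}(\mathfrak{n})=\{\nu\mathcal{O}_K:\nu\in K^*,\ \nu\equiv^*1\pmod{\mathfrak{n}}\}$, where $\equiv^*$ is multiplicative congruence. $\mathcal{Q}(d_K)$ is the set of primitive positive definite binary quadratic forms $ax^2+bxy+cy^2\in\mathbb{Z}[x,y]$ with $b^2-4ac=d_K$, and $\mathcal{Q}_N(d_K)=\{ax^2+bxy+cy^2\in\mathcal{Q}(d_K):\gcd(N,a)=1\}$. For $Q=ax^2+bxy+cy^2\in\mathcal{Q}(d_K)$, $\omega_Q=(-b+\sqrt{d_K})/(2a)\in\mathbb{H}$ and $[\omega_Q,1]=\mathbb{Z}\omega_Q+\mathbb{Z}$,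 which is a fractional ideal of $K$ lying in $I_K(\mathfrak{n})$ when $Q\in\mathcal{Q}_N(d_K)$. For $\gamma\in\mathrm{SL}_2(\mathbb{Z})$, $Q^\gamma(x,y)=Q(\gamma\,(x,y)^T)$. For a subgroup $\Gamma\subseteq\mathrm{SL}_2(\mathbb{Z})$, the relation $\sim_\Gamma$ on $\mathcal{Q}_N(d_K)$ is: $Q\sim_\Gamma Q'$ iff $Q'=Q^\gamma$ for some $\gamma\in\Gamma$. *)

theory Defs
  imports Complex_Main "HOL-Algebra.Coset" "HOL-Computational_Algebra.Squarefree"
begin

definition fundamental_disc :: "int \<Rightarrow> bool" where
  "fundamental_disc d \<longleftrightarrow> d \<noteq> 1 \<and>
     ((d mod 4 = 1 \<and> squarefree d) \<or>
      (\<exists>m. d = 4 * m \<and> (m mod 4 = 2 \<or> m mod 4 = 3) \<and> squarefree m))"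

definition sqrt_disc :: "int \<Rightarrow> complex" where
  "sqrt_disc d = \<i> * complex_of_real (sqrt (real_of_int (- d)))"

definition Kfield :: "int \<Rightarrow> complex set" where
  "Kfield d = {of_rat x + of_rat y * sqrt_disc d | x y. True}"

definition OK :: "int \<Rightarrow> complex set" where
  "OK d = {of_int x + of_int y * ((of_int d + sqrt_disc d) / 2) | x y. True}"

definition OK_span :: "int \<Rightarrow> complex list \<Rightarrow> complex set" where
  "OK_span d gs = {sum_list (map2 (*) rs gs) | rs. length rs = length gs \<and> set rs \<subseteq> OK d}"

definition frac_ideal :: "int \<Rightarrow> complex set \<Rightarrow> bool" where
  "frac_ideal d A \<longleftrightarrow> (\<exists>gs. set gs \<subseteq> Kfield d \<and> A = OK_span d gs) \<and> A \<noteq> {0}"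

definition ideal_mult :: "complex set \<Rightarrow> complex set \<Rightarrow> complex set" where
  "ideal_mult A B = {sum_list (map2 (*) as bs) | as bs.
       length as = length bs \<and> set as \<subseteq> A \<and> set bs \<subseteq> B}"

definition principal :: "int \<Rightarrow> complex \<Rightarrow> complex set" where
  "principal d \<nu> = (\<lambda>x. \<nu> * x) ` OK d"

definition nideal :: "int \<Rightarrow> nat \<Rightarrow> complex set" where
  "nideal d N = principal d (of_nat N)"

definition coprime_integral :: "int \<Rightarrow> nat \<Rightarrow> complex set \<Rightarrow> bool" where
  "coprime_integral d N B \<longleftrightarrow> frac_ideal d B \<and> B \<subseteq> OK d \<and>
     {b + c | b c. b \<in> B \<and> c \<in> nideal d N} = OK d"

text \<open>I_K(n): fractional ideals relatively prime to n, i.e. of the form B C^{-1}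
  with B, C integral ideals coprime to n (equivalently A C = B).\<close>
definition IK_set :: "int \<Rightarrow> nat \<Rightarrow> complex set set" where
  "IK_set d N = {A. frac_ideal d A \<and>
     (\<exists>B C. coprime_integral d N B \<and> coprime_integral d N C \<and> ideal_mult A C = B)}"

definition IK :: "int \<Rightarrow> nat \<Rightarrow> complex set monoid" where
  "IK d N = \<lparr>carrier = IK_set d N, monoid.mult = ideal_mult, one = OK d\<rparr>"

definition PK :: "int \<Rightarrow> nat \<Rightarrow> complex set set" where
  "PK d N = {principal d \<nu> | \<nu>. \<nu> \<in> Kfield d \<and> \<nu> \<noteq> 0 \<and> principal d \<nu> \<in> IK_set d N}"

definition mult_cong_one :: "int \<Rightarrow> nat \<Rightarrow> complex \<Rightarrow> bool" where
  "mult_cong_one d N \<nu> \<longleftrightarrow> (\<exists>\<alpha> \<beta>. \<alpha> \<in> OK d \<and> \<beta> \<in> OK d \<and> \<alpha> \<noteq> 0 \<and> \<beta> \<noteq> 0 \<and>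
      coprime_integral d N (principal d \<alpha>) \<and> coprime_integral d N (principal d \<beta>) \<and>
      \<nu> = \<alpha> / \<beta> \<and> \<alpha> - \<beta> \<in> nideal d N)"

definition PK1 :: "int \<Rightarrow> nat \<Rightarrow> complex set set" where
  "PK1 d N = {principal d \<nu> | \<nu>. \<nu> \<in> Kfield d \<and> \<nu> \<noteq> 0 \<and> mult_cong_one d N \<nu>}"

section \<open>Binary quadratic forms; a form a x^2 + b x y + c y^2 is the triple (a,b,c)\<close>

definition Qforms :: "int \<Rightarrow> (int \<times> int \<times> int) set" where
  "Qforms d = {(a, b, c). b^2 - 4 * a * c = d \<and> a > 0 \<and> c > 0 \<and> gcd (gcd a b) c = 1}"

definition QformsN :: "int \<Rightarrow> nat \<Rightarrow> (int \<times> int \<times> int) set" where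
  "QformsN d N = {(a, b, c) \<in> Qforms d. coprime (int N) a}"

definition omegaQ :: "int \<Rightarrow> int \<times> int \<times> int \<Rightarrow> complex" where
  "omegaQ d Q = (case Q of (a, b, c) \<Rightarrow> (- of_int b + sqrt_disc d) / (2 * of_int a))"

definition latQ :: "int \<Rightarrow> int \<times> int \<times> int \<Rightarrow> complex set" where
  "latQ d Q = {of_int m * omegaQ d Q + of_int n | m n. True}"

text \<open>SL_2(Z): a matrix [[p,q],[r,s]] is the tuple (p,q,r,s).\<close>
definition sl2_mult :: "int \<times> int \<times> int \<times> int \<Rightarrow> int \<times> int \<times> int \<times> int \<Rightarrow> int \<times> int \<times> int \<times> int" where
  "sl2_mult g h = (case g of (p, q, r, s) \<Rightarrow> case h of (p', q', r', s') \<Rightarrow>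
     (p * p' + q * r', p * q' + q * s', r * p' + s * r', r * q' + s * s'))"

definition SL2Z :: "(int \<times> int \<times> int \<times> int) monoid" where
  "SL2Z = \<lparr>carrier = {(p, q, r, s). p * s - q * r = 1}, monoid.mult = sl2_mult, one = (1, 0, 0, 1)\<rparr>"

text \<open>Q^gamma(x,y) = Q(p x + q y, r x + s y).\<close>
definition form_act :: "int \<times> int \<times> int \<Rightarrow> int \<times> int \<times> int \<times> int \<Rightarrow> int \<times> int \<times> int" where
  "form_act Q g = (case Q of (a, b, c) \<Rightarrow> case g of (p, q, r, s) \<Rightarrow>
     (a * p^2 + b * p * r + c * r^2,
      2 * a * p * q + b * (p * s + q * r) + 2 * c * r * s,
      a * q^2 + b * q * s + c * s^2))"

definition form_equiv :: "(int \<times> int \<times> int \<times> int) set \<Rightarrow> int \<times> int \<times> int \<Rightarrow> int \<times> int \<times> int \<Rightarrow> bool" where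
  "form_equiv \<Gamma> Q Q' \<longleftrightarrow> (\<exists>g\<in>\<Gamma>. Q' = form_act Q g)"

end

theory Submission
  imports Defs
begin

text \<open>Write \<open>A = B C\<^sup>-\<^sup>1\<close> with integral \<open>B, C\<close> prime to \<open>n\<close> and pick \<open>\<gamma> \<in> C\<close> with \<open>\<gamma> \<equiv> 1 mod n\<close>.
  Then \<open>X = \<gamma>A \<subseteq> B\<close> is an integral ideal containing some \<open>u \<equiv> 1 mod n\<close>. Expanding \<open>u\<close> in a
  \<open>\<int>\<close>-basis of \<open>X\<close> and changing the basis by a matrix in \<open>SL\<^sub>2(\<int>)\<close> congruent to a suitable
  one modulo \<open>N\<close>, one obtains an oriented basis \<open>\<beta>, \<beta>'\<close> of \<open>X\<close> with \<open>\<beta> \<equiv> 1 mod n\<close>. Then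
  \<open>X/\<beta> = [\<omega>, 1]\<close> for \<open>\<omega> = \<beta>'/\<beta>\<close>, and expressing the multiplication by \<open>\<theta>\<close> in this basis shows
  \<open>\<omega> = \<omega>\<^sub>Q\<close> for a primitive form \<open>Q\<close> of discriminant \<open>d\<close>, whose leading coefficient divides the norm
  of \<open>\<beta>\<close>, hence is prime to \<open>N\<close>. Finally \<open>[\<omega>\<^sub>Q, 1] = (\<gamma>/\<beta>) A\<close> and \<open>\<gamma>/\<beta> \<equiv>\<^sup>* 1 mod n\<close>,
  so \<open>[\<omega>\<^sub>Q, 1]\<close> and \<open>A\<close> have the same class modulo \<open>P \<supseteq> P\<^sub>K\<^sub>,\<^sub>1(n)\<close>.\<close>

section \<open>The ring of integers \<open>\<int>[\<theta>]\<close>\<close>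

definition OK_gen :: "int \<Rightarrow> complex" where
  "OK_gen d = (of_int d + sqrt_disc d) / 2"

lemma sqrt_disc_square: "d < 0 \<Longrightarrow> sqrt_disc d * sqrt_disc d = of_int d"
  by (simp add: sqrt_disc_def complex_eq_iff)

lemma Re_sqrt_disc [simp]: "Re (sqrt_disc d) = 0"
  and Im_sqrt_disc [simp]: "Im (sqrt_disc d) = sqrt (real_of_int (- d))"
  by (simp_all add: sqrt_disc_def)

lemma Re_OK_gen [simp]: "Re (OK_gen d) = real_of_int d / 2"
  and Im_OK_gen [simp]: "Im (OK_gen d) = sqrt (real_of_int (- d)) / 2"
  by (simp_all add: OK_gen_def)

locale imag_quadratic =
  fixes d :: int
  assumes disc_neg: "d < 0" and disc_cong: "4 dvd d - d * d"
begin

abbreviation \<theta> :: complex where "\<theta> \<equiv> OK_gen d"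

lemma Im_OK_gen_pos: "Im \<theta> > 0"
  using disc_neg by simp

lemma OK_gen_square: "\<theta> * \<theta> = of_int d * \<theta> + of_int ((d - d * d) div 4)"
proof -
  have e: "of_int ((d - d * d) div 4) = ((of_int d - of_int d * of_int d) / 4 :: complex)"
  proof -
    obtain k where "d - d * d = 4 * k" using disc_cong by blast
    then have "(of_int d - of_int d * of_int d :: complex) = 4 * of_int k"
      by (metis of_int_diff of_int_mult of_int_numeral)
    then show ?thesis using \<open>d - d * d = 4 * k\<close> by simp
  qed
  show ?thesis
    unfolding e using sqrt_disc_square[OF disc_neg] by (simp add: OK_gen_def field_simps)
qed

lemma OK_iff: "z \<in> OK d \<longleftrightarrow> (\<exists>x y. z = of_int x + of_int y * \<theta>)"
  unfolding OK_def OK_gen_def by auto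

lemma of_int_in_OK [simp]: "of_int x \<in> OK d"
  unfolding OK_iff by (rule exI[of _ x], rule exI[of _ 0]) simp

lemma zero_in_OK [simp]: "0 \<in> OK d"
  and one_in_OK [simp]: "1 \<in> OK d"
  and of_nat_in_OK [simp]: "of_nat n \<in> OK d"
  using of_int_in_OK[of 0] of_int_in_OK[of 1] of_int_in_OK[of "int n"] by simp_all

lemma OK_gen_in_OK [simp]: "\<theta> \<in> OK d"
  unfolding OK_iff by (rule exI[of _ 0], rule exI[of _ 1]) simp

lemma OK_add [intro]: "a \<in> OK d \<Longrightarrow> b \<in> OK d \<Longrightarrow> a + b \<in> OK d"
proof -
  assume "a \<in> OK d" "b \<in> OK d"
  then obtain x y x' y' where "a = of_int x + of_int y * \<theta>" "b = of_int x' + of_int y' * \<theta>"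
    unfolding OK_iff by blast
  then have "a + b = of_int (x + x') + of_int (y + y') * \<theta>" by (simp add: algebra_simps)
  then show ?thesis unfolding OK_iff by blast
qed

lemma OK_uminus [intro]: "a \<in> OK d \<Longrightarrow> - a \<in> OK d"
proof -
  assume "a \<in> OK d"
  then obtain x y where "a = of_int x + of_int y * \<theta>" unfolding OK_iff by blast
  then have "- a = of_int (- x) + of_int (- y) * \<theta>" by simp
  then show ?thesis unfolding OK_iff by blast
qed

lemma OK_diff [intro]: "a \<in> OK d \<Longrightarrow> b \<in> OK d \<Longrightarrow> a - b \<in> OK d"
  using OK_add OK_uminus by (metis diff_conv_add_uminus)

lemma OK_mult [intro]: "a \<in> OK d \<Longrightarrow> b \<in> OK d \<Longrightarrow> a * b \<in> OK d"
proof -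
  assume "a \<in> OK d" "b \<in> OK d"
  then obtain x y x' y' where a: "a = of_int x + of_int y * \<theta>" and b: "b = of_int x' + of_int y' * \<theta>"
    unfolding OK_iff by blast
  define e where "e = (d - d * d) div 4"
  have "a * b = of_int x * of_int x' + (of_int x * of_int y' + of_int y * of_int x') * \<theta>
      + of_int y * of_int y' * (\<theta> * \<theta>)" unfolding a b by (simp add: algebra_simps)
  also have "\<dots> = of_int (x * x' + y * y' * e) + of_int (x * y' + y * x' + y * y' * d) * \<theta>"
    unfolding OK_gen_square e_def by (simp add: algebra_simps)
  finally show ?thesis unfolding OK_iff by blast
qed

lemma OK_real_imp_int: "z \<in> OK d \<Longrightarrow> Im z = 0 \<Longrightarrow> \<exists>x. z = of_int x"
  unfolding OK_iff using Im_OK_gen_pos by auto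

lemma Im_OK: "z \<in> OK d \<Longrightarrow> \<exists>y. Im z = of_int y * Im \<theta>"
  unfolding OK_iff by auto

lemma OK_cnj [intro]: "z \<in> OK d \<Longrightarrow> cnj z \<in> OK d"
proof -
  assume "z \<in> OK d"
  then obtain x y where "z = of_int x + of_int y * \<theta>" unfolding OK_iff by blast
  then have "cnj z = of_int (x + y * d) + of_int (- y) * \<theta>"
    by (simp add: complex_eq_iff algebra_simps)
  then show ?thesis unfolding OK_iff by blast
qed

lemma OK_mult_cnj_int: "z \<in> OK d \<Longrightarrow> \<exists>m. z * cnj z = of_int m"
  by (rule OK_real_imp_int) (auto simp: algebra_simps)

lemma OK_subset_Kfield: "z \<in> OK d \<Longrightarrow> z \<in> Kfield d"
proof -
  assume "z \<in> OK d"
  then obtain x y where "z = of_int x + of_int y * \<theta>" unfolding OK_iff by blast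
  then have "z = of_rat (of_int x + of_int y * of_int d / 2) + of_rat (of_int y / 2) * sqrt_disc d"
    by (simp add: OK_gen_def of_rat_add of_rat_mult of_rat_divide field_simps)
  then show ?thesis unfolding Kfield_def by blast
qed

lemma Kfield_divide_of_int: "z \<in> Kfield d \<Longrightarrow> z / of_int m \<in> Kfield d"
proof -
  assume "z \<in> Kfield d"
  then obtain x y where "z = of_rat x + of_rat y * sqrt_disc d" unfolding Kfield_def by blast
  then have "z / of_int m = of_rat (x / of_int m) + of_rat (y / of_int m) * sqrt_disc d"
    by (simp add: of_rat_divide add_divide_distrib)
  then show ?thesis unfolding Kfield_def by blast
qed

text \<open>Clearing the denominator by the integer \<open>\<beta> * cnj \<beta>\<close> avoids inverting in \<open>K\<close>.\<close>
lemma OK_divide_in_Kfield: "\<gamma> \<in> OK d \<Longrightarrow> \<beta> \<in> OK d \<Longrightarrow> \<gamma> / \<beta> \<in> Kfield d"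
proof -
  assume "\<gamma> \<in> OK d" "\<beta> \<in> OK d"
  moreover obtain m where m: "\<beta> * cnj \<beta> = of_int m" using OK_mult_cnj_int \<open>\<beta> \<in> OK d\<close> by blast
  ultimately have "\<gamma> * cnj \<beta> / of_int m \<in> Kfield d"
    by (intro Kfield_divide_of_int OK_subset_Kfield OK_mult OK_cnj)
  moreover have "\<gamma> / \<beta> = \<gamma> * cnj \<beta> / of_int m"
    by (cases "\<beta> = 0") (simp_all flip: m)
  ultimately show ?thesis by simp
qed

end

section \<open>\<open>O\<^sub>K\<close>-modules and products of ideals\<close>

lemma sum_list_map2_scale_left:
  "sum_list (map2 (*) (map ((*) c) xs) ys) = (c :: 'a :: comm_semiring_0) * sum_list (map2 (*) xs ys)"
  by (induction xs ys rule: list_induct2') (auto simp: algebra_simps)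

lemma sum_list_map2_commute:
  "sum_list (map2 (*) xs ys) = sum_list (map2 (*) ys (xs :: 'a :: comm_semiring_0 list))"
  by (induction xs ys rule: list_induct2') (auto simp: algebra_simps)

lemma sum_list_map2_add:
  "length xs = length zs \<Longrightarrow> length ys = length zs \<Longrightarrow>
   sum_list (map2 (*) (map2 (+) xs ys) zs) =
   sum_list (map2 (*) xs zs) + sum_list (map2 (*) ys (zs :: 'a :: comm_semiring_0 list))"
proof (induction zs arbitrary: xs ys)
  case (Cons z zs)
  then obtain x xs' y ys' where "xs = x # xs'" "ys = y # ys'"
    by (metis length_Suc_conv)
  with Cons show ?case by (simp add: algebra_simps)
qed simp

lemma sum_list_map2_replicate_zero:
  "sum_list (map2 (*) (replicate n 0) (xs :: 'a :: comm_semiring_0 list)) = 0"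
  by (induction n arbitrary: xs) (simp, case_tac xs, simp_all)

lemma ex_map_subset_image: "set ys \<subseteq> f ` S \<Longrightarrow> \<exists>xs. ys = map f xs \<and> set xs \<subseteq> S"
proof (induction ys)
  case (Cons y ys)
  then obtain xs x where "ys = map f xs" "set xs \<subseteq> S" "x \<in> S" "y = f x" by auto
  then show ?case by (intro exI[of _ "x # xs"]) auto
qed simp

lemma ideal_mult_commute: "ideal_mult A B = ideal_mult B A"
  unfolding ideal_mult_def by (metis (no_types, lifting) sum_list_map2_commute)

lemma mult_mem_ideal_mult: "a \<in> A \<Longrightarrow> b \<in> B \<Longrightarrow> a * b \<in> ideal_mult A B"
  unfolding ideal_mult_def by (intro CollectI exI[of _ "[a]"] exI[of _ "[b]"]) simp

lemma ideal_mult_scale_left: "ideal_mult ((*) c ` A) B = (*) c ` ideal_mult A B"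
proof
  show "ideal_mult ((*) c ` A) B \<subseteq> (*) c ` ideal_mult A B"
  proof
    fix z assume "z \<in> ideal_mult ((*) c ` A) B"
    then obtain as bs where z: "z = sum_list (map2 (*) as bs)" "length as = length bs"
      "set as \<subseteq> (*) c ` A" "set bs \<subseteq> B" unfolding ideal_mult_def by auto
    then obtain as' where "as = map ((*) c) as'" "set as' \<subseteq> A" using ex_map_subset_image by metis
    with z show "z \<in> (*) c ` ideal_mult A B" unfolding ideal_mult_def
      by (auto simp: sum_list_map2_scale_left)
  qed
  show "(*) c ` ideal_mult A B \<subseteq> ideal_mult ((*) c ` A) B"
  proof
    fix z assume "z \<in> (*) c ` ideal_mult A B"
    then obtain as bs where z: "z = c * sum_list (map2 (*) as bs)" "length as = length bs"
      "set as \<subseteq> A" "set bs \<subseteq> B" unfolding ideal_mult_def by auto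
    then show "z \<in> ideal_mult ((*) c ` A) B" unfolding ideal_mult_def
      by (intro CollectI exI[of _ "map ((*) c) as"] exI[of _ bs]) (auto simp: sum_list_map2_scale_left)
  qed
qed

lemma ideal_mult_scale_right: "ideal_mult A ((*) c ` B) = (*) c ` ideal_mult A B"
  using ideal_mult_scale_left ideal_mult_commute by metis

lemma image_mult_image_mult: "(*) a ` (*) b ` A = (*) (a * b) ` (A :: 'a :: semigroup_mult set)"
  by (auto simp: image_iff mult.assoc)

definition OK_module :: "int \<Rightarrow> complex set \<Rightarrow> bool" where
  "OK_module d X \<longleftrightarrow> 0 \<in> X \<and> (\<forall>x\<in>X. \<forall>y\<in>X. x + y \<in> X) \<and> (\<forall>r\<in>OK d. \<forall>x\<in>X. r * x \<in> X)"

context imag_quadratic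
begin

lemma OK_moduleD:
  assumes "OK_module d X"
  shows OK_module_zero: "0 \<in> X"
    and OK_module_add: "x \<in> X \<Longrightarrow> y \<in> X \<Longrightarrow> x + y \<in> X"
    and OK_module_mult: "r \<in> OK d \<Longrightarrow> x \<in> X \<Longrightarrow> r * x \<in> X"
  using assms unfolding OK_module_def by auto

lemma OK_module_of_int_mult: "OK_module d X \<Longrightarrow> x \<in> X \<Longrightarrow> of_int m * x \<in> X"
  by (simp add: OK_module_mult)

lemma OK_module_diff: "OK_module d X \<Longrightarrow> x \<in> X \<Longrightarrow> y \<in> X \<Longrightarrow> x - y \<in> X"
  using OK_module_add OK_module_of_int_mult[of X y "-1"] by (metis diff_conv_add_uminus mult_minus1 of_int_minus of_int_1)

lemma OK_module_lincomb:
  "OK_module d X \<Longrightarrow> x \<in> X \<Longrightarrow> y \<in> X \<Longrightarrow> of_int i * x + of_int j * y \<in> X"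
  by (simp add: OK_module_add OK_module_of_int_mult)

lemma OK_module_sum_list_map2:
  "OK_module d X \<Longrightarrow> length rs = length xs \<Longrightarrow> set rs \<subseteq> OK d \<Longrightarrow> set xs \<subseteq> X
   \<Longrightarrow> sum_list (map2 (*) rs xs) \<in> X"
proof (induction rs arbitrary: xs)
  case (Cons r rs)
  then obtain x xs' where "xs = x # xs'" by (metis length_Suc_conv)
  with Cons show ?case by (simp add: OK_module_add OK_module_mult)
qed (simp add: OK_module_zero)

lemma OK_module_OK_span: "OK_module d (OK_span d gs)"
  unfolding OK_module_def
proof (intro conjI ballI)
  show "0 \<in> OK_span d gs" unfolding OK_span_def
    by (intro CollectI exI[of _ "replicate (length gs) 0"]) (auto simp: sum_list_map2_replicate_zero set_replicate_conv_if)
next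
  fix x y assume "x \<in> OK_span d gs" "y \<in> OK_span d gs"
  then obtain rs rs' where "x = sum_list (map2 (*) rs gs)" "length rs = length gs" "set rs \<subseteq> OK d"
     "y = sum_list (map2 (*) rs' gs)" "length rs' = length gs" "set rs' \<subseteq> OK d"
    unfolding OK_span_def by auto
  then show "x + y \<in> OK_span d gs" unfolding OK_span_def
    by (intro CollectI exI[of _ "map2 (+) rs rs'"])
      (auto simp: sum_list_map2_add elim!: in_set_zipE)
next
  fix r x assume "r \<in> OK d" "x \<in> OK_span d gs"
  then obtain rs where "x = sum_list (map2 (*) rs gs)" "length rs = length gs" "set rs \<subseteq> OK d"
    unfolding OK_span_def by auto
  with \<open>r \<in> OK d\<close> show "r * x \<in> OK_span d gs" unfolding OK_span_def
    by (intro CollectI exI[of _ "map ((*) r) rs"]) (auto simp: sum_list_map2_scale_left)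
qed

lemma frac_ideal_OK_module: "frac_ideal d A \<Longrightarrow> OK_module d A"
  unfolding frac_ideal_def using OK_module_OK_span by auto

lemma OK_module_image_mult:
  assumes X: "OK_module d X"
  shows "OK_module d ((*) c ` X)"
  unfolding OK_module_def
proof (intro conjI ballI)
  show "0 \<in> (*) c ` X" using OK_module_zero[OF X] by (auto intro: image_eqI[of _ _ 0])
  fix x y assume "x \<in> (*) c ` X" "y \<in> (*) c ` X"
  then obtain x' y' where "x' \<in> X" "y' \<in> X" "x = c * x'" "y = c * y'" by blast
  then show "x + y \<in> (*) c ` X"
    using OK_module_add[OF X] by (auto intro!: image_eqI[of _ _ "x' + y'"] simp: distrib_left)
next
  fix r x assume "r \<in> OK d" "x \<in> (*) c ` X"
  then obtain x' where "x' \<in> X" "x = c * x'" by blast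
  then show "r * x \<in> (*) c ` X"
    using OK_module_mult[OF X \<open>r \<in> OK d\<close>] by (auto intro!: image_eqI[of _ _ "r * x'"] simp: mult.left_commute)
qed

lemma principal_eq_OK_span: "principal d \<nu> = OK_span d [\<nu>]"
  unfolding principal_def OK_span_def
  by (auto simp: length_Suc_conv mult.commute intro!: exI[of _ "[_]"])

lemma OK_module_principal: "OK_module d (principal d \<nu>)"
  using principal_eq_OK_span OK_module_OK_span by simp

lemma generator_in_principal: "\<nu> \<in> principal d \<nu>"
  unfolding principal_def by (auto intro: image_eqI[of _ _ 1])

lemma ideal_mult_principal:
  assumes "OK_module d X"
  shows "ideal_mult X (principal d \<nu>) = (*) \<nu> ` X"
proof -
  have "ideal_mult (principal d \<nu>) X \<subseteq> (*) \<nu> ` X"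
  proof
    fix z assume "z \<in> ideal_mult (principal d \<nu>) X"
    then obtain as xs where z: "z = sum_list (map2 (*) as xs)" "length as = length xs"
      "set as \<subseteq> principal d \<nu>" "set xs \<subseteq> X" unfolding ideal_mult_def by auto
    then obtain rs where rs: "as = map ((*) \<nu>) rs" "set rs \<subseteq> OK d"
      using ex_map_subset_image unfolding principal_def by metis
    with z have "z = \<nu> * sum_list (map2 (*) rs xs)" by (simp add: sum_list_map2_scale_left)
    moreover have "sum_list (map2 (*) rs xs) \<in> X"
      using OK_module_sum_list_map2[OF assms] z rs by simp
    ultimately show "z \<in> (*) \<nu> ` X" by blast
  qed
  moreover have "(*) \<nu> ` X \<subseteq> ideal_mult (principal d \<nu>) X"
    using mult_mem_ideal_mult generator_in_principal by blast
  ultimately show ?thesis by (auto simp: ideal_mult_commute)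
qed

lemma ideal_mult_integral_subset:
  assumes "OK_module d A" and "C \<subseteq> OK d"
  shows "ideal_mult A C \<subseteq> A"
proof
  fix z assume "z \<in> ideal_mult A C"
  then obtain as cs where "z = sum_list (map2 (*) cs as)" "length cs = length as"
    "set as \<subseteq> A" "set cs \<subseteq> C" unfolding ideal_mult_def by (auto simp: sum_list_map2_commute)
  then show "z \<in> A" using OK_module_sum_list_map2[OF assms(1)] assms(2) by auto
qed

lemma nideal_iff: "z \<in> nideal d N \<longleftrightarrow> (\<exists>w\<in>OK d. z = of_nat N * w)"
  unfolding nideal_def principal_def by auto

lemma OK_module_nideal: "OK_module d (nideal d N)"
  unfolding nideal_def by (rule OK_module_principal)

lemma nideal_subset_OK: "nideal d N \<subseteq> OK d"
  using OK_mult[OF of_nat_in_OK] by (auto simp: nideal_iff)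

lemma cong_one_mult:
  assumes "x \<in> OK d" "x - 1 \<in> nideal d N" "y - 1 \<in> nideal d N"
  shows "x * y - 1 \<in> nideal d N"
proof -
  have "x * (y - 1) + (x - 1) \<in> nideal d N"
    using assms OK_module_nideal by (simp add: OK_module_add OK_module_mult)
  moreover have "x * (y - 1) + (x - 1) = x * y - 1" by (simp add: algebra_simps)
  ultimately show ?thesis by simp
qed

lemma cong_one_diff: "x - 1 \<in> nideal d N \<Longrightarrow> y - 1 \<in> nideal d N \<Longrightarrow> x - y \<in> nideal d N"
  using OK_module_diff[OF OK_module_nideal, of "x - 1" N "y - 1"] by simp

end

section \<open>Ideals prime to \<open>n\<close> and the classes modulo \<open>P\<close>\<close>

context imag_quadratic
begin

lemma frac_ideal_principal:
  assumes "\<nu> \<in> Kfield d" "\<nu> \<noteq> 0"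
  shows "frac_ideal d (principal d \<nu>)"
proof -
  have "principal d \<nu> \<noteq> {0}" using assms(2) generator_in_principal by blast
  then show ?thesis
    unfolding frac_ideal_def using principal_eq_OK_span assms(1) by (intro conjI exI[of _ "[\<nu>]"]) auto
qed

lemma coprime_integral_principal:
  assumes "x \<in> OK d" "x \<noteq> 0" "x - 1 \<in> nideal d N"
  shows "coprime_integral d N (principal d x)"
  unfolding coprime_integral_def
proof (intro conjI)
  show "frac_ideal d (principal d x)" using assms OK_subset_Kfield frac_ideal_principal by blast
  show "principal d x \<subseteq> OK d" unfolding principal_def using assms by auto
  obtain w where w: "w \<in> OK d" "x - 1 = of_nat N * w" using assms(3) nideal_iff by auto
  show "{b + c |b c. b \<in> principal d x \<and> c \<in> nideal d N} = OK d"
  proof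
    show "{b + c |b c. b \<in> principal d x \<and> c \<in> nideal d N} \<subseteq> OK d"
      unfolding principal_def using assms nideal_subset_OK by auto
    show "OK d \<subseteq> {b + c |b c. b \<in> principal d x \<and> c \<in> nideal d N}"
    proof
      fix z assume z: "z \<in> OK d"
      have "z = x * z + of_nat N * (- (w * z))" using w by (simp add: algebra_simps)
      moreover have "x * z \<in> principal d x" unfolding principal_def using z by auto
      moreover have "of_nat N * (- (w * z)) \<in> nideal d N"
        unfolding nideal_iff using z w by (intro bexI[of _ "- (w * z)"]) auto
      ultimately show "z \<in> {b + c |b c. b \<in> principal d x \<and> c \<in> nideal d N}" by blast
    qed
  qed
qed

lemma principal_quotient_in_PK1:
  assumes "\<gamma> \<in> OK d" "\<gamma> \<noteq> 0" "\<gamma> - 1 \<in> nideal d N"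
    and "\<beta> \<in> OK d" "\<beta> \<noteq> 0" "\<beta> - 1 \<in> nideal d N"
  shows "principal d (\<gamma> / \<beta>) \<in> PK1 d N"
proof -
  have "mult_cong_one d N (\<gamma> / \<beta>)"
    unfolding mult_cong_one_def
    using assms coprime_integral_principal cong_one_diff by (intro exI[of _ \<gamma>] exI[of _ \<beta>]) simp
  moreover have "\<gamma> / \<beta> \<in> Kfield d" "\<gamma> / \<beta> \<noteq> 0"
    using assms OK_divide_in_Kfield by simp_all
  ultimately show ?thesis unfolding PK1_def by blast
qed

lemma IK_carrier_OK_module: "A \<in> carrier (IK d N) \<Longrightarrow> OK_module d A"
  unfolding IK_def IK_set_def using frac_ideal_OK_module by auto

lemma r_coset_image_mult_subset:
  assumes "subgroup P (IK d N)" and "principal d \<nu> \<in> P"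
  shows "P #>\<^bsub>IK d N\<^esub> ((*) \<nu> ` A) \<subseteq> P #>\<^bsub>IK d N\<^esub> A"
proof
  fix z assume "z \<in> P #>\<^bsub>IK d N\<^esub> ((*) \<nu> ` A)"
  then obtain p where p: "p \<in> P" and z: "z = ideal_mult p ((*) \<nu> ` A)"
    unfolding r_coset_def by (auto simp: IK_def)
  have "ideal_mult p (principal d \<nu>) \<in> P"
    using subgroup.m_closed[OF assms(1) p assms(2)] by (simp add: IK_def)
  then have "(*) \<nu> ` p \<in> P"
    using ideal_mult_principal IK_carrier_OK_module subgroup.mem_carrier[OF assms(1) p] by simp
  moreover have "z = ideal_mult ((*) \<nu> ` p) A"
    unfolding z ideal_mult_scale_left ideal_mult_scale_right ..
  ultimately show "z \<in> P #>\<^bsub>IK d N\<^esub> A"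
    unfolding r_coset_def by (auto simp: IK_def)
qed

lemma r_coset_image_mult:
  assumes "subgroup P (IK d N)" and "principal d \<nu> \<in> P" and "principal d (1 / \<nu>) \<in> P"
    and "\<nu> \<noteq> 0"
  shows "P #>\<^bsub>IK d N\<^esub> ((*) \<nu> ` A) = P #>\<^bsub>IK d N\<^esub> A"
proof
  have "A = (*) (1 / \<nu>) ` (*) \<nu> ` A"
    using \<open>\<nu> \<noteq> 0\<close> by (simp only: image_mult_image_mult) simp
  then show "P #>\<^bsub>IK d N\<^esub> A \<subseteq> P #>\<^bsub>IK d N\<^esub> ((*) \<nu> ` A)"
    using r_coset_image_mult_subset[OF assms(1,3)] by metis
qed (rule r_coset_image_mult_subset[OF assms(1,2)])

lemma coprime_integral_cong_one:
  assumes "coprime_integral d N B"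
  obtains b where "b \<in> B" "b - 1 \<in> nideal d N"
proof -
  have "1 \<in> {b + c |b c. b \<in> B \<and> c \<in> nideal d N}"
    using assms unfolding coprime_integral_def by simp
  then obtain b c where "b \<in> B" "c \<in> nideal d N" "1 = b + c" by blast
  moreover have "b - 1 = 0 - c" using \<open>1 = b + c\<close> by (simp add: algebra_simps)
  ultimately show ?thesis
    using that OK_module_diff[OF OK_module_nideal OK_module_zero[OF OK_module_nideal]] by metis
qed

lemma coprime_integral_nonzero_cong_one:
  assumes C: "coprime_integral d N C"
  obtains \<gamma> where "\<gamma> \<in> C" "\<gamma> \<noteq> 0" "\<gamma> - 1 \<in> nideal d N"
proof -
  obtain c where c: "c \<in> C" "c - 1 \<in> nideal d N" using coprime_integral_cong_one[OF C] .
  show ?thesis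
  proof (cases "c = 0")
    case True
    text \<open>Then \<open>n = O\<^sub>K\<close>, and any nonzero element of \<open>C\<close> will do.\<close>
    have "C \<noteq> {0}" "0 \<in> C" "C \<subseteq> OK d"
      using C frac_ideal_OK_module OK_module_zero unfolding coprime_integral_def frac_ideal_def by auto
    then obtain \<gamma> where \<gamma>: "\<gamma> \<in> C" "\<gamma> \<noteq> 0" "\<gamma> \<in> OK d" by blast
    have "(c - 1) - \<gamma> * (c - 1) \<in> nideal d N"
      using c(2) OK_module_diff[OF OK_module_nideal] OK_module_mult[OF OK_module_nideal \<gamma>(3)] by blast
    then have "\<gamma> - 1 \<in> nideal d N" using True by simp
    with \<gamma> that show ?thesis by blast
  qed (use c that in blast)
qed

lemma IK_integral_multiple:
  assumes "A \<in> carrier (IK d N)"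
  obtains \<gamma> u where "\<gamma> \<in> OK d" "\<gamma> \<noteq> 0" "\<gamma> - 1 \<in> nideal d N" "(*) \<gamma> ` A \<subseteq> OK d"
    "u \<in> (*) \<gamma> ` A" "u - 1 \<in> nideal d N"
proof -
  obtain B C where A: "frac_ideal d A" and B: "coprime_integral d N B"
    and C: "coprime_integral d N C" and AC: "ideal_mult A C = B"
    using assms unfolding IK_def IK_set_def by auto
  have C_OK: "C \<subseteq> OK d" and B_OK: "B \<subseteq> OK d"
    using B C unfolding coprime_integral_def by auto
  obtain \<gamma> where \<gamma>: "\<gamma> \<in> C" "\<gamma> \<noteq> 0" "\<gamma> - 1 \<in> nideal d N"
    using coprime_integral_nonzero_cong_one[OF C] .
  have "(*) \<gamma> ` A \<subseteq> B"
    using AC mult_mem_ideal_mult[OF _ \<gamma>(1)] by (auto simp: mult.commute)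
  moreover obtain b where b: "b \<in> B" "b - 1 \<in> nideal d N"
    using coprime_integral_cong_one[OF B] .
  moreover have "b \<in> A"
    using b(1) AC ideal_mult_integral_subset[OF frac_ideal_OK_module[OF A] C_OK] by blast
  ultimately show ?thesis
    using that[of \<gamma> "\<gamma> * b"] \<gamma> C_OK B_OK cong_one_mult by blast
qed

end

section \<open>\<open>\<int>\<close>-bases of integral ideals\<close>

lemma int_lincomb_closed_generator:
  fixes S :: "int set"
  assumes closed: "\<And>x y m. x \<in> S \<Longrightarrow> y \<in> S \<Longrightarrow> x + m * y \<in> S" and "k \<in> S" "k > 0"
  obtains g where "g > 0" "g \<in> S" "\<And>y. y \<in> S \<Longrightarrow> g dvd y"
proof -
  define n where "n = (LEAST n::nat. n > 0 \<and> int n \<in> S)"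
  have n: "n > 0 \<and> int n \<in> S"
    unfolding n_def by (rule LeastI[of _ "nat k"]) (use assms(2,3) in simp)
  have least: "m > 0 \<Longrightarrow> int m \<in> S \<Longrightarrow> n \<le> m" for m
    unfolding n_def by (rule Least_le) simp
  have "int n dvd y" if "y \<in> S" for y
  proof (rule ccontr)
    assume "\<not> int n dvd y"
    then have "y mod int n \<noteq> 0" by (simp add: dvd_eq_mod_eq_0)
    moreover have "y mod int n \<ge> 0" using n by simp
    ultimately have pos: "y mod int n > 0" by linarith
    have "y + (- (y div int n)) * int n \<in> S" using closed[OF that] n by blast
    also have "y + (- (y div int n)) * int n = y mod int n"
      using minus_div_mult_eq_mod[of y "int n"] by simp
    finally have "y mod int n \<in> S" .
    then have "n \<le> nat (y mod int n)" using least[of "nat (y mod int n)"] pos by simp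
    moreover have "y mod int n < int n" using n by simp
    ultimately show False using pos by linarith
  qed
  then show ?thesis using that[of "int n"] n by simp
qed

context imag_quadratic
begin

lemma OK_ideal_pos_int:
  assumes X: "OK_module d X" "X \<subseteq> OK d" and z0: "z0 \<in> X" "z0 \<noteq> 0"
  obtains m where "m > 0" "of_int m \<in> X"
proof -
  obtain m where m: "z0 * cnj z0 = of_int m" using OK_mult_cnj_int z0 X by blast
  have "of_int m \<in> X"
    using OK_module_mult[OF X(1) OK_cnj z0(1)] z0 X by (auto simp: m[symmetric] mult.commute)
  moreover have "real_of_int m = (cmod z0)\<^sup>2"
    using complex_norm_square[of z0] m by (metis of_real_eq_iff of_real_of_int_eq)
  moreover have "(cmod z0)\<^sup>2 > 0" using z0(2) by simp
  ultimately show ?thesis using that[of m] by linarith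
qed

lemma OK_ideal_int_basis:
  assumes X: "OK_module d X" "X \<subseteq> OK d" and z0: "z0 \<in> X" "z0 \<noteq> 0"
  obtains e1 e2 where "e1 \<in> X" "e2 \<in> X" "Im (cnj e1 * e2) > 0"
    "\<And>z. z \<in> X \<Longrightarrow> \<exists>p q. z = of_int p * e1 + of_int q * e2"
proof -
  obtain m0 where m0_pos: "m0 > 0" and m0X: "of_int m0 \<in> X" using OK_ideal_pos_int[OF X z0] .
  text \<open>The integers in \<open>X\<close> form \<open>n\<int>\<close>, and the \<open>\<theta>\<close>-coordinates of elements of \<open>X\<close> form \<open>g\<int>\<close>.\<close>
  obtain n where n: "n > 0" "n \<in> {x. of_int x \<in> X}" "\<And>y. y \<in> {x. of_int x \<in> X} \<Longrightarrow> n dvd y"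
  proof (rule int_lincomb_closed_generator[of _ m0])
    show "x + m * y \<in> {x. of_int x \<in> X}" if "x \<in> {x. of_int x \<in> X}" "y \<in> {x. of_int x \<in> X}" for x y m
      using OK_module_lincomb[OF X(1), of "of_int x" "of_int y" 1 m] that by simp
  qed (use m0X m0_pos in simp_all)
  have Ys_closed: "of_int (x1 + m * y1) + of_int (x + m * y) * \<theta> \<in> X"
    if "of_int x1 + of_int x * \<theta> \<in> X" "of_int y1 + of_int y * \<theta> \<in> X" for x y x1 y1 m
  proof -
    have "(of_int x1 + of_int x * \<theta>) + of_int m * (of_int y1 + of_int y * \<theta>) \<in> X"
      using OK_module_lincomb[OF X(1) that, of 1 m] by simp
    then show ?thesis by (simp add: algebra_simps)
  qed
  have m0_theta: "of_int 0 + of_int m0 * \<theta> \<in> X"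
    using OK_module_mult[OF X(1) OK_gen_in_OK m0X] by (simp add: mult.commute)
  obtain g where g: "g > 0" "g \<in> {y. \<exists>x. of_int x + of_int y * \<theta> \<in> X}"
    "\<And>y. y \<in> {y. \<exists>x. of_int x + of_int y * \<theta> \<in> X} \<Longrightarrow> g dvd y"
  proof (rule int_lincomb_closed_generator[of _ m0])
    show "x + m * y \<in> {y. \<exists>x. of_int x + of_int y * \<theta> \<in> X}"
      if "x \<in> {y. \<exists>x. of_int x + of_int y * \<theta> \<in> X}" "y \<in> {y. \<exists>x. of_int x + of_int y * \<theta> \<in> X}"
      for x y m
      using that Ys_closed by blast
  qed (use m0_pos m0_theta in blast)+
  then obtain x0 where E: "of_int x0 + of_int g * \<theta> \<in> X" by blast
  have "\<exists>p q. z = of_int p * of_int n + of_int q * (of_int x0 + of_int g * \<theta>)" if z: "z \<in> X" for z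
  proof -
    obtain x y where xy: "z = of_int x + of_int y * \<theta>" using z X OK_iff by blast
    have "g dvd y" using g(3) z xy by blast
    then obtain q where q: "y = g * q" by (rule dvdE)
    have "z - of_int q * (of_int x0 + of_int g * \<theta>) \<in> X"
      using OK_module_diff[OF X(1) z OK_module_of_int_mult[OF X(1) E]] .
    moreover have "z - of_int q * (of_int x0 + of_int g * \<theta>) = of_int (x - q * x0)"
      unfolding xy q by (simp add: algebra_simps)
    ultimately have "n dvd x - q * x0" using n(3) by simp
    then obtain p where "x - q * x0 = n * p" by (rule dvdE)
    then have "z = of_int p * of_int n + of_int q * (of_int x0 + of_int g * \<theta>)"
      unfolding xy q by (simp add: algebra_simps)
    then show ?thesis by blast
  qed
  moreover have "Im (cnj (of_int n) * (of_int x0 + of_int g * \<theta>)) > 0"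
    using n(1) g(1) Im_OK_gen_pos by simp
  ultimately show ?thesis using that[of "of_int n"] n(2) E by blast
qed

end

lemma coprime_if_no_common_prime:
  fixes a q :: int
  assumes "q \<noteq> 0" and "\<And>l. prime l \<Longrightarrow> l dvd q \<Longrightarrow> \<not> l dvd a"
  shows "coprime a q"
proof (rule ccontr)
  assume "\<not> coprime a q"
  then obtain c where c: "c dvd a" "c dvd q" "\<not> is_unit c" by (rule not_coprimeE)
  then have "c \<noteq> 0" using assms(1) by auto
  then obtain l where "prime l" "l dvd c" using c(3) by (rule prime_divisorE)
  then show False using assms(2) c(1,2) dvd_trans by blast
qed

text \<open>If \<open>gcd(p, q, N) = 1\<close>, then \<open>p\<close> can be made coprime to \<open>q\<close> by adding a multiple of \<open>N\<close>:
  add \<open>N\<close> times the product of the primes dividing \<open>q\<close> but not \<open>p\<close>.\<close>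
lemma coprime_add_mult_left:
  fixes p q N :: int
  assumes "gcd (gcd p q) N = 1" and "q \<noteq> 0"
  obtains k where "coprime (p + k * N) q"
proof -
  define S where "S = {l. prime l \<and> l dvd q \<and> \<not> l dvd p}"
  have "S \<subseteq> {-\<bar>q\<bar>..\<bar>q\<bar>}" unfolding S_def using assms(2) by (auto dest!: dvd_imp_le_int)
  then have S: "finite S" by (rule finite_subset) simp
  have "\<not> l dvd p + \<Prod>S * N" if l: "prime l" "l dvd q" for l
  proof
    assume l_dvd: "l dvd p + \<Prod>S * N"
    show False
    proof (cases "l dvd p")
      case True
      then have "l dvd \<Prod>S * N" using l_dvd by (metis dvd_add_right_iff)
      then have "l dvd \<Prod>S \<or> l dvd N" using l(1) prime_dvd_mult_iff by blast
      then show False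
      proof
        assume "l dvd \<Prod>S"
        then obtain l' where "l' \<in> S" "l dvd l'" using prime_dvd_prod_iff[OF S l(1)] by auto
        then have "l = l'" using l(1) unfolding S_def
          by (metis mem_Collect_eq primes_dvd_imp_eq prime_int_iff)
        then show False using \<open>l' \<in> S\<close> True unfolding S_def by auto
      next
        assume "l dvd N"
        then have "l dvd gcd (gcd p q) N" using True l(2) by auto
        then show False using assms(1) l(1) by (simp add: prime_int_iff)
      qed
    next
      case False
      then have "l dvd \<Prod>S" using l dvd_prodI[OF S, of l "\<lambda>x. x"] unfolding S_def by simp
      then show False using False l_dvd by (metis dvd_add_left_iff dvd_mult2)
    qed
  qed
  then have "coprime (p + \<Prod>S * N) q"
    using assms(2) coprime_if_no_common_prime by blast
  then show ?thesis by (rule that)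
qed

lemma coprime_add_mults:
  fixes p q N :: int
  assumes "gcd (gcd p q) N = 1"
  obtains k l where "coprime (p + k * N) (q + l * N)"
proof (cases "q = 0")
  case True
  then have "coprime p N" using assms by (simp add: coprime_iff_gcd_eq_1)
  then show ?thesis using True that[of 0 1] by simp
next
  case False
  then show ?thesis using coprime_add_mult_left[OF assms] that[of _ 0] by auto
qed

lemma Im_cnj_mult_lincomb:
  "Im (cnj (of_int p * e1 + of_int q * e2) * (of_int r * e1 + of_int s * e2)) =
   of_int (p * s - q * r) * Im (cnj e1 * e2)"
  by (simp add: algebra_simps)

lemma lincomb_unimodular_change:
  fixes e1 e2 :: complex
  assumes "p * s - q * r = 1"
  shows "of_int i * e1 + of_int j * e2 =
    of_int (i * s - j * r) * (of_int p * e1 + of_int q * e2) +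
    of_int (j * p - i * q) * (of_int r * e1 + of_int s * e2)"
proof -
  have "of_int i * e1 + of_int j * e2 =
      of_int (i * (p * s - q * r)) * e1 + of_int (j * (p * s - q * r)) * e2"
    using assms by simp
  then show ?thesis by (simp add: algebra_simps)
qed

context imag_quadratic
begin

lemma lincomb_coeffs_coprime:
  assumes "e1 \<in> OK d" "e2 \<in> OK d" and "of_int p * e1 + of_int q * e2 - 1 \<in> nideal d N"
  shows "gcd (gcd p q) (int N) = 1"
proof -
  define h where "h = gcd (gcd p q) (int N)"
  obtain p1 q1 N1 where pq: "p = h * p1" "q = h * q1" "int N = h * N1"
    unfolding h_def by (meson dvd_trans gcd_dvd1 gcd_dvd2 dvdE)
  obtain w where w: "w \<in> OK d" "of_int p * e1 + of_int q * e2 - 1 = of_nat N * w"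
    using assms(3) nideal_iff by auto
  define v where "v = of_int p1 * e1 + of_int q1 * e2 - of_int N1 * w"
  have "v \<in> OK d" unfolding v_def using assms w by (intro OK_diff OK_add OK_mult) auto
  have hv: "of_int h * v = 1"
  proof -
    have "(of_nat N :: complex) = of_int h * of_int N1" by (metis of_int_mult of_int_of_nat_eq pq(3))
    then show ?thesis using w(2) unfolding v_def pq by (simp add: algebra_simps)
  qed
  have "real_of_int h * Im v = Im (of_int h * v)" by simp
  then have "real_of_int h * Im v = 0" by (simp only: hv) simp
  moreover have "h \<noteq> 0" using hv by auto
  ultimately have "Im v = 0" by simp
  then obtain x where "v = of_int x" using OK_real_imp_int \<open>v \<in> OK d\<close> by blast
  with hv have "h * x = 1" by (metis of_int_1 of_int_eq_iff of_int_mult)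
  moreover have "h \<ge> 0" unfolding h_def by simp
  ultimately show ?thesis unfolding h_def using zmult_eq_1_iff by fastforce
qed

text \<open>An integral ideal containing an element \<open>u \<equiv> 1 mod n\<close> has a positively oriented
  \<open>\<int>\<close>-basis whose first vector is \<open>\<equiv> 1 mod n\<close>: write \<open>u = p e\<^sub>1 + q e\<^sub>2\<close>, move \<open>(p, q)\<close> modulo
  \<open>N\<close> to a coprime pair and complete it to a matrix in \<open>SL\<^sub>2(\<int>)\<close>.\<close>
lemma OK_ideal_basis_cong_one:
  assumes X: "OK_module d X" "X \<subseteq> OK d" and z0: "z0 \<in> X" "z0 \<noteq> 0"
    and u: "u \<in> X" "u - 1 \<in> nideal d N"
  obtains \<beta> \<beta>' where "\<beta> \<in> X" "\<beta>' \<in> X" "\<beta> - 1 \<in> nideal d N" "Im (cnj \<beta> * \<beta>') > 0"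
    "\<And>z. z \<in> X \<Longrightarrow> \<exists>i j. z = of_int i * \<beta> + of_int j * \<beta>'"
proof -
  obtain e1 e2 where e: "e1 \<in> X" "e2 \<in> X" "Im (cnj e1 * e2) > 0"
    and span: "\<And>z. z \<in> X \<Longrightarrow> \<exists>p q. z = of_int p * e1 + of_int q * e2"
    using OK_ideal_int_basis[OF X z0] by blast
  obtain p q where upq: "u = of_int p * e1 + of_int q * e2" using span[OF u(1)] by blast
  have "gcd (gcd p q) (int N) = 1"
    using lincomb_coeffs_coprime e X u upq by blast
  then obtain k l where "coprime (p + k * int N) (q + l * int N)" by (rule coprime_add_mults)
  then obtain s r where bez: "(p + k * int N) * s - (q + l * int N) * r = 1"
    using bezout_int[of "p + k * int N" "q + l * int N"]
    by (metis coprime_iff_gcd_eq_1 diff_minus_eq_add mult.commute mult_minus_left)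
  define \<beta> where "\<beta> = of_int (p + k * int N) * e1 + of_int (q + l * int N) * e2"
  define \<beta>' where "\<beta>' = of_int r * e1 + of_int s * e2"
  have "\<beta> - 1 = (u - 1) + of_nat N * (of_int k * e1 + of_int l * e2)"
    unfolding \<beta>_def upq by (simp add: algebra_simps)
  moreover have "of_nat N * (of_int k * e1 + of_int l * e2) \<in> nideal d N"
    using OK_module_lincomb[OF X(1) e(1,2)] X(2) nideal_iff by blast
  ultimately have "\<beta> - 1 \<in> nideal d N"
    using OK_module_add[OF OK_module_nideal u(2)] by (simp only:)
  moreover have "Im (cnj \<beta> * \<beta>') > 0"
    unfolding \<beta>_def \<beta>'_def Im_cnj_mult_lincomb bez using e(3) by simp
  moreover have "\<exists>i j. z = of_int i * \<beta> + of_int j * \<beta>'" if "z \<in> X" for z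
    using span[OF that] lincomb_unimodular_change[OF bez] unfolding \<beta>_def \<beta>'_def by blast
  ultimately show ?thesis
    using that OK_module_lincomb[OF X(1) e(1,2)] unfolding \<beta>_def \<beta>'_def by blast
qed

end

section \<open>Forms attached to oriented bases\<close>

lemma fundamental_disc_cong:
  assumes "fundamental_disc d"
  shows "4 dvd d - d * d"
proof -
  have "d mod 4 = 1 \<or> 4 dvd d" using assms unfolding fundamental_disc_def by auto
  then have "4 dvd 1 - d \<or> 4 dvd d" by presburger
  moreover have "d - d * d = d * (1 - d)" by (simp add: algebra_simps)
  ultimately show ?thesis by auto
qed

lemma disc_mod_4: "((b :: int)\<^sup>2 - 4 * a * c) mod 4 = 0 \<or> (b\<^sup>2 - 4 * a * c) mod 4 = 1"
proof -
  have "b\<^sup>2 mod 4 = 0 \<or> b\<^sup>2 mod 4 = 1"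
  proof (cases "even b")
    case True
    then obtain k where "b = 2 * k" by blast
    then show ?thesis by (simp add: power2_eq_square)
  next
    case False
    then obtain k where "b = 2 * k + 1" by (blast elim: oddE)
    then have "b\<^sup>2 = 4 * (k * k + k) + 1" by (simp add: power2_eq_square algebra_simps)
    then show ?thesis by presburger
  qed
  moreover have "(b\<^sup>2 - 4 * a * c) mod 4 = b\<^sup>2 mod 4" by (simp add: mod_diff_eq[symmetric] mult.assoc)
  ultimately show ?thesis by simp
qed

lemma fundamental_disc_square_factor:
  assumes fd: "fundamental_disc d" and k: "k > 0" and dk: "d = k\<^sup>2 * (b\<^sup>2 - 4 * a * c)"
  shows "k = 1"
proof -
  define d' where "d' = b\<^sup>2 - 4 * a * c"
  have d': "d' mod 4 = 0 \<or> d' mod 4 = 1" unfolding d'_def by (rule disc_mod_4)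
  have kd: "k\<^sup>2 dvd d" using dk by simp
  from fd consider "squarefree d"
    | m where "d = 4 * m" "m mod 4 = 2 \<or> m mod 4 = 3" "squarefree m"
    unfolding fundamental_disc_def by auto
  then show ?thesis
  proof cases
    case 1
    then have "is_unit k" using kd unfolding squarefree_def power2_eq_square by blast
    then show ?thesis using k by simp
  next
    case (2 m)
    show ?thesis
    proof (cases "even k")
      case True
      then obtain j where j: "k = 2 * j" by blast
      then have m: "m = j\<^sup>2 * d'" using dk 2(1) unfolding d'_def by (simp add: power_mult_distrib)
      then have "is_unit j" using 2(3) unfolding squarefree_def by simp
      then have "m = d'" using m j k by simp
      then have False using d' 2(2) by auto
      then show ?thesis ..
    next
      case False
      then have "coprime (k\<^sup>2) 4"
        by (metis coprime_power_left_iff coprime_power_right_iff odd_iff_mod_2_eq_one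
            coprime_mod_left_iff power2_eq_square numeral_Bit0 mult_2 zero_neq_numeral coprime_1_left)
      then have "k\<^sup>2 dvd m" using kd 2(1) coprime_dvd_mult_right_iff by blast
      then have "is_unit k" using 2(3) unfolding squarefree_def power2_eq_square by blast
      then show ?thesis using k by simp
    qed
  qed
qed

lemma fundamental_disc_primitive:
  fixes a b c :: int
  assumes "fundamental_disc d" and "b\<^sup>2 - 4 * a * c = d" and "a \<noteq> 0"
  shows "gcd (gcd a b) c = 1"
proof -
  define k where "k = gcd (gcd a b) c"
  have "k > 0" unfolding k_def using assms(3) by simp
  obtain a' b' c' where "a = k * a'" "b = k * b'" "c = k * c'"
    unfolding k_def by (meson dvd_trans gcd_dvd1 gcd_dvd2 dvdE)
  then have "d = k\<^sup>2 * (b'\<^sup>2 - 4 * a' * c')"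
    using assms(2) by (simp add: power2_eq_square algebra_simps)
  then show ?thesis
    using fundamental_disc_square_factor[OF assms(1) \<open>k > 0\<close>] unfolding k_def by blast
qed

context imag_quadratic
begin

text \<open>Comparing the two expressions for \<open>\<theta>\<omega>\<close> yields the quadratic equation of \<open>\<omega>\<close>;
  its linear part must vanish because \<open>\<omega>\<close> is not real.\<close>
lemma Qforms_of_OK_gen_action:
  assumes fd: "fundamental_disc d" and Im: "Im \<omega> > 0"
    and h1: "\<theta> = of_int s0 + of_int a * \<omega>" and h2: "\<theta> * \<omega> = of_int s1 + of_int t1 * \<omega>"
  shows "(a, 2 * s0 - d, - s1) \<in> Qforms d" and "omegaQ d (a, 2 * s0 - d, - s1) = \<omega>"
    and "Im \<omega> = Im \<theta> / of_int a"
proof -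
  have Im_\<theta>: "Im \<theta> = of_int a * Im \<omega>" using arg_cong[OF h1, of Im] by simp
  then have a: "a > 0" using Im_OK_gen_pos Im by (simp add: zero_less_mult_iff)
  then show "Im \<omega> = Im \<theta> / of_int a" using Im_\<theta> by simp
  define b where "b = 2 * s0 - d"
  have aC: "(of_int a :: complex) \<noteq> 0" using a by simp
  have \<omega>: "\<omega> = (- of_int b + sqrt_disc d) / (2 * of_int a)"
  proof -
    have "\<omega> = (\<theta> - of_int s0) / of_int a" using h1 aC by (simp add: field_simps)
    then show ?thesis unfolding b_def OK_gen_def using aC by (simp add: field_simps)
  qed
  then show "omegaQ d (a, 2 * s0 - d, - s1) = \<omega>" unfolding omegaQ_def b_def by simp
  define c0 :: complex where "c0 = (of_int b * of_int b - of_int d) / (4 * of_int a)"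
  have quad: "of_int a * \<omega> * \<omega> = - (of_int b * \<omega>) - c0"
  proof -
    have "2 * of_int a * \<omega> + of_int b = sqrt_disc d" using \<omega> aC by (simp add: field_simps)
    then have "(2 * of_int a * \<omega> + of_int b) * (2 * of_int a * \<omega> + of_int b) = of_int d"
      using sqrt_disc_square[OF disc_neg] by simp
    then show ?thesis unfolding c0_def using aC by (simp add: field_simps)
  qed
  have "of_int s1 + of_int t1 * \<omega> = of_int s0 * \<omega> + of_int a * \<omega> * \<omega>"
    unfolding h2[symmetric] h1 by (simp add: algebra_simps)
  then have e: "of_int (s0 - b - t1) * \<omega> = of_int s1 + c0"
    unfolding quad by (simp add: algebra_simps)
  have "real_of_int (s0 - b - t1) * Im \<omega> = 0"
    using arg_cong[OF e, of Im] unfolding c0_def by simp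
  then have "s0 - b - t1 = 0" using Im by simp
  with e have "c0 = - of_int s1" by (simp add: eq_neg_iff_add_eq_0 add.commute)
  then have "(of_int (b * b - d) :: complex) = of_int (4 * a * (- s1))"
    unfolding c0_def using aC by (simp add: field_simps)
  then have disc: "b\<^sup>2 - 4 * a * (- s1) = d"
    unfolding of_int_eq_iff power2_eq_square by simp
  moreover have "- s1 > 0"
  proof -
    have "4 * a * (- s1) > 0" using disc disc_neg by (smt (verit) zero_le_power2)
    then show ?thesis using a by (simp add: zero_less_mult_iff mult_less_0_iff)
  qed
  ultimately show "(a, 2 * s0 - d, - s1) \<in> Qforms d"
    unfolding Qforms_def b_def[symmetric] using a fundamental_disc_primitive[OF fd disc] by simp
qed

lemma OK_ideal_div_eq_latQ:
  assumes fd: "fundamental_disc d" and X: "OK_module d X" "X \<subseteq> OK d"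
    and \<beta>: "\<beta> \<in> X" "\<beta>' \<in> X" "Im (cnj \<beta> * \<beta>') > 0"
    and span: "\<And>z. z \<in> X \<Longrightarrow> \<exists>i j. z = of_int i * \<beta> + of_int j * \<beta>'"
  obtains Q m where "Q \<in> Qforms d" "(\<lambda>z. z / \<beta>) ` X = latQ d Q" "\<beta> * cnj \<beta> = of_int (fst Q * m)"
proof -
  define \<omega> where "\<omega> = \<beta>' / \<beta>"
  have "\<beta> \<noteq> 0" using \<beta>(3) by auto
  have Im_\<omega>: "Im \<omega> = Im (cnj \<beta> * \<beta>') / (cmod \<beta>)\<^sup>2"
    unfolding \<omega>_def Im_divide' by (simp add: algebra_simps)
  then have "Im \<omega> > 0" using \<beta>(3) \<open>\<beta> \<noteq> 0\<close> by simp
  have span': "\<exists>i j. z / \<beta> = of_int i + of_int j * \<omega>" if "z \<in> X" for z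
    using span[OF that] \<open>\<beta> \<noteq> 0\<close> unfolding \<omega>_def by (auto simp: field_simps)
  obtain s0 a where "\<theta> * \<beta> / \<beta> = of_int s0 + of_int a * \<omega>"
    using span'[OF OK_module_mult[OF X(1) OK_gen_in_OK \<beta>(1)]] by blast
  then have h1: "\<theta> = of_int s0 + of_int a * \<omega>" using \<open>\<beta> \<noteq> 0\<close> by simp
  obtain s1 t1 where "\<theta> * \<beta>' / \<beta> = of_int s1 + of_int t1 * \<omega>"
    using span'[OF OK_module_mult[OF X(1) OK_gen_in_OK \<beta>(2)]] by blast
  then have h2: "\<theta> * \<omega> = of_int s1 + of_int t1 * \<omega>" unfolding \<omega>_def by simp
  define Q where "Q = (a, 2 * s0 - d, - s1)"
  note form = Qforms_of_OK_gen_action[OF fd \<open>Im \<omega> > 0\<close> h1 h2, folded Q_def]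
  obtain y where y: "Im (cnj \<beta> * \<beta>') = of_int y * Im \<theta>"
    using Im_OK X(2) \<beta>(1,2) by (meson OK_cnj OK_mult subsetD)
  have cancel: "n = a' * y'" if "t \<noteq> 0" "a' \<noteq> 0" "n \<noteq> 0" "t / a' = y' * t / n" for t n a' y' :: real
    using that by (simp add: field_simps)
  have "a \<noteq> 0" using form(3) \<open>Im \<omega> > 0\<close> by auto
  then have "(cmod \<beta>)\<^sup>2 = of_int (a * y)"
    using cancel[of "Im \<theta>"] form(3) Im_\<omega> y Im_OK_gen_pos \<open>\<beta> \<noteq> 0\<close> by (simp del: Im_OK_gen)
  then have "\<beta> * cnj \<beta> = of_int (fst Q * y)"
    unfolding Q_def complex_norm_square[symmetric] by simp
  moreover have "(\<lambda>z. z / \<beta>) ` X = latQ d Q"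
  proof
    show "(\<lambda>z. z / \<beta>) ` X \<subseteq> latQ d Q"
      using span' unfolding latQ_def form(2) by (fastforce simp: add.commute)
    show "latQ d Q \<subseteq> (\<lambda>z. z / \<beta>) ` X"
    proof
      fix w assume "w \<in> latQ d Q"
      then obtain i j where w: "w = of_int i * \<omega> + of_int j" unfolding latQ_def form(2) by auto
      have "w = (of_int j * \<beta> + of_int i * \<beta>') / \<beta>"
        unfolding w \<omega>_def using \<open>\<beta> \<noteq> 0\<close> by (simp add: field_simps)
      then show "w \<in> (\<lambda>z. z / \<beta>) ` X" using OK_module_lincomb[OF X(1) \<beta>(1,2)] by blast
    qed
  qed
  ultimately show ?thesis using that form(1) by blast
qed

lemma norm_cong_one:
  assumes "\<beta> - 1 \<in> nideal d N"
  obtains t where "\<beta> * cnj \<beta> = of_int (1 + int N * t)"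
proof -
  obtain w where w: "w \<in> OK d" "\<beta> = 1 + of_nat N * w"
    using assms nideal_iff by (metis diff_add_cancel add.commute)
  obtain x where x: "w + cnj w = of_int x"
    using OK_real_imp_int[of "w + cnj w"] w(1) by auto
  obtain y where y: "w * cnj w = of_int y" using OK_mult_cnj_int w(1) by blast
  have "\<beta> * cnj \<beta> = 1 + of_nat N * (w + cnj w) + of_nat N * of_nat N * (w * cnj w)"
    unfolding w(2) by (simp add: algebra_simps)
  then have "\<beta> * cnj \<beta> = of_int (1 + int N * (x + int N * y))"
    unfolding x y by (simp add: algebra_simps)
  then show ?thesis by (rule that)
qed

lemma OK_ideal_cong_one_div_eq_latQ:
  assumes fd: "fundamental_disc d" and X: "OK_module d X" "X \<subseteq> OK d"
    and z0: "z0 \<in> X" "z0 \<noteq> 0" and u: "u \<in> X" "u - 1 \<in> nideal d N"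
  obtains \<beta> Q where "\<beta> \<in> OK d" "\<beta> \<noteq> 0" "\<beta> - 1 \<in> nideal d N" "Q \<in> QformsN d N"
    "(\<lambda>z. z / \<beta>) ` X = latQ d Q"
proof -
  obtain \<beta> \<beta>' where \<beta>: "\<beta> \<in> X" "\<beta>' \<in> X" "\<beta> - 1 \<in> nideal d N" "Im (cnj \<beta> * \<beta>') > 0"
    and span: "\<And>z. z \<in> X \<Longrightarrow> \<exists>i j. z = of_int i * \<beta> + of_int j * \<beta>'"
    using OK_ideal_basis_cong_one[OF X z0 u] by blast
  obtain Q m where Q: "Q \<in> Qforms d" "(\<lambda>z. z / \<beta>) ` X = latQ d Q"
    and norm: "\<beta> * cnj \<beta> = of_int (fst Q * m)"
    using OK_ideal_div_eq_latQ[OF fd X \<beta>(1,2,4) span] by blast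
  text \<open>The leading coefficient divides the norm of \<open>\<beta>\<close>, which is \<open>\<equiv> 1 mod N\<close>.\<close>
  obtain t where "\<beta> * cnj \<beta> = of_int (1 + int N * t)" using norm_cong_one[OF \<beta>(3)] .
  then have "fst Q * m = 1 + int N * t" using norm by (metis of_int_eq_iff)
  then have "coprime (int N) (fst Q)"
  proof (intro coprimeI)
    fix c assume "c dvd int N" "c dvd fst Q"
    then have "c dvd fst Q * m - int N * t" by simp
    then show "is_unit c" using \<open>fst Q * m = 1 + int N * t\<close> by simp
  qed
  then have "Q \<in> QformsN d N" using Q(1) unfolding QformsN_def by auto
  moreover have "\<beta> \<noteq> 0" using \<beta>(4) by auto
  ultimately show ?thesis using that \<beta>(1,3) Q(2) X(2) by blast
qed

end

theorem proposition2p3: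
  fixes d :: int and N :: nat and P :: "complex set set"
    and \<Gamma> :: "(int \<times> int \<times> int \<times> int) set"
  assumes "fundamental_disc d" and "d < 0" and "N > 0"
    and "subgroup P (IK d N)"
    and "PK1 d N \<subseteq> P" and "P \<subseteq> PK d N"
    and "subgroup \<Gamma> SL2Z"
    and welldef: "\<forall>Q\<in>QformsN d N. \<forall>Q'\<in>QformsN d N. form_equiv \<Gamma> Q Q' \<longrightarrow>
                    P #>\<^bsub>IK d N\<^esub> latQ d Q = P #>\<^bsub>IK d N\<^esub> latQ d Q'"
  shows "\<forall>A\<in>carrier (IK d N). \<exists>Q\<in>QformsN d N.
           P #>\<^bsub>IK d N\<^esub> latQ d Q = P #>\<^bsub>IK d N\<^esub> A"
proof
  interpret imag_quadratic d
    using assms(2) fundamental_disc_cong[OF assms(1)] by unfold_locales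
  fix A assume A: "A \<in> carrier (IK d N)"
  obtain \<gamma> u where \<gamma>: "\<gamma> \<in> OK d" "\<gamma> \<noteq> 0" "\<gamma> - 1 \<in> nideal d N"
    and integral: "(*) \<gamma> ` A \<subseteq> OK d" and u: "u \<in> (*) \<gamma> ` A" "u - 1 \<in> nideal d N"
    using IK_integral_multiple[OF A] by blast
  obtain a0 where "a0 \<in> A" "a0 \<noteq> 0"
    using A OK_module_zero[OF IK_carrier_OK_module[OF A]] unfolding IK_def IK_set_def frac_ideal_def
    by auto
  then have "\<gamma> * a0 \<in> (*) \<gamma> ` A" "\<gamma> * a0 \<noteq> 0" using \<gamma>(2) by auto
  then obtain \<beta> Q where \<beta>: "\<beta> \<in> OK d" "\<beta> \<noteq> 0" "\<beta> - 1 \<in> nideal d N" and Q: "Q \<in> QformsN d N"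
    and lat: "(\<lambda>z. z / \<beta>) ` (*) \<gamma> ` A = latQ d Q"
    using OK_ideal_cong_one_div_eq_latQ[OF assms(1) OK_module_image_mult[OF IK_carrier_OK_module[OF A]]
        integral _ _ u] by blast
  have lat_A: "latQ d Q = (*) (\<gamma> / \<beta>) ` A" unfolding lat[symmetric] by (auto simp: image_iff)
  have "P #>\<^bsub>IK d N\<^esub> latQ d Q = P #>\<^bsub>IK d N\<^esub> A"
    unfolding lat_A
  proof (rule r_coset_image_mult[OF assms(4)])
    show "principal d (\<gamma> / \<beta>) \<in> P" "principal d (1 / (\<gamma> / \<beta>)) \<in> P"
      using principal_quotient_in_PK1[OF \<gamma> \<beta>] principal_quotient_in_PK1[OF \<beta> \<gamma>] assms(5) by auto
  qed (use \<gamma>(2) \<beta>(2) in simp)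
  then show "\<exists>Q\<in>QformsN d N. P #>\<^bsub>IK d N\<^esub> latQ d Q = P #>\<^bsub>IK d N\<^esub> A"
    using Q by blast
qed

end
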